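(* Let $\beta\in[0,1)$ and let $\lambda$ be a principal eigenvalue of $\Delta_\beta$. Then $\lambda\le1$. Moreover, if $\beta\in(0,\tfrac12]$, then $\lambda<1$.
   Context: Tree: for an integer $m\ge2$, $\mathbb{T}_m$ has vertices the root $\emptyset$ and all finite sequences $(\emptyset,a_1,\dots,a_k)$, $a_i\in\{0,\dots,m-1\}$; $|x|$ is the level, successors of $x$ are $(x,i)$, $\hat x$ is the immediate predecessor of $x\ne\emptyset$. A branch is an infinite sequence $(x_n)_{n\ge0}$ with $x_0=\emptyset$, $x_{n+1}$ a successor of $x_n$; $\partial\mathbb{T}_m$ is the set of branches; $\lim_{x\to y}u(x)=\lim_n u(x_n)$ for $y=(x_n)$. Operator: $p_\beta=1$ if $\beta=0$, $p_\beta=\beta/(1-\beta)$ if $\beta\in(0,1)$. $\Delta_\beta u(\emptyset)=\frac1m\sum_{i=0}^{m-1}u(\emptyset,i)-u(\emptyset)$ and, for $x\ne\emptyset$, $\Delta_\beta u(x)=\big(\beta u(\hat x)+\frac{1-\beta}{m}\sum_{i=0}^{m-1}u(x,i)-u(x)\big)p_\beta^{-|x|}$. Eigenvalues: $\lambda\in\mathbb{R}$ is an eigenvalue of $\Delta_\beta$ if there is a bounded $u:\mathbb{T}_m\to\mathbb{R}$, $u\not\equiv0$, with $-\Delta_\beta u=\lambda u$ on $\mathbb{T}_m$ and $\lim_{x\to y}u(x)=0$ for every $y\in\partial\mathbb{T}_m$. An eigenvalue $\lambda>0$ is principal if it has a non-negative eigenfunction. *)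

theory Defs
  imports Complex_Main
begin

text \<open>Vertices of the m-ary tree: finite sequences (a_1,...,a_k) with a_i < m,
  represented as lists; the root is [], the successors of x are x @ [i] (i < m),
  the predecessor of x is butlast x, the level is length x.\<close>

definition tree :: "nat \<Rightarrow> nat list set" where
  "tree m = {x. \<forall>a\<in>set x. a < m}"

definition branches :: "nat \<Rightarrow> (nat \<Rightarrow> nat list) set" where
  "branches m = {xs. xs 0 = [] \<and> (\<forall>n. \<exists>i<m. xs (Suc n) = xs n @ [i])}"

definition p_beta :: "real \<Rightarrow> real" where
  "p_beta \<beta> = (if \<beta> = 0 then 1 else \<beta> / (1 - \<beta>))"

definition Delta :: "nat \<Rightarrow> real \<Rightarrow> (nat list \<Rightarrow> real) \<Rightarrow> nat list \<Rightarrow> real" where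
  "Delta m \<beta> u x =
     (if x = [] then (1 / real m) * (\<Sum>i<m. u [i]) - u []
      else (\<beta> * u (butlast x) + ((1 - \<beta>) / real m) * (\<Sum>i<m. u (x @ [i])) - u x)
           * inverse (p_beta \<beta> ^ length x))"

definition is_eigenfunction :: "nat \<Rightarrow> real \<Rightarrow> real \<Rightarrow> (nat list \<Rightarrow> real) \<Rightarrow> bool" where
  "is_eigenfunction m \<beta> lam u \<longleftrightarrow>
     (\<exists>B. \<forall>x\<in>tree m. \<bar>u x\<bar> \<le> B) \<and>
     (\<exists>x\<in>tree m. u x \<noteq> 0) \<and>
     (\<forall>x\<in>tree m. - Delta m \<beta> u x = lam * u x) \<and>
     (\<forall>xs\<in>branches m. (\<lambda>n. u (xs n)) \<longlonglongrightarrow> 0)"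

definition is_eigenvalue :: "nat \<Rightarrow> real \<Rightarrow> real \<Rightarrow> bool" where
  "is_eigenvalue m \<beta> lam \<longleftrightarrow> (\<exists>u. is_eigenfunction m \<beta> lam u)"

definition is_principal_eigenvalue :: "nat \<Rightarrow> real \<Rightarrow> real \<Rightarrow> bool" where
  "is_principal_eigenvalue m \<beta> lam \<longleftrightarrow>
     lam > 0 \<and> (\<exists>u. is_eigenfunction m \<beta> lam u \<and> (\<forall>x\<in>tree m. u x \<ge> 0))"

end

theory Submission
  imports Defs
begin

text \<open>A strong minimum principle. At a vertex x \<noteq> [] the equation -\<Delta>u = \<lambda>u reads
  \<beta> u(x^) + (1-\<beta>)/m \<Sum> u(x,i) = (1 - \<lambda> p_\<beta>^|x|) u(x), so a non-negative solution vanishing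
  at x vanishes at all children of x and, if \<beta> > 0, at its parent; hence it vanishes below x.
  At the root the equation reads (1/m) \<Sum> u(i) = (1 - \<lambda>) u(\<emptyset>). For \<lambda> > 1 both sides have
  opposite signs, so the root and its children vanish and u \<equiv> 0. For \<lambda> = 1 the children
  vanish, and if \<beta> > 0 the parent step at a child forces u(\<emptyset>) = 0 as well.\<close>

lemma snoc_in_tree_iff: "x @ [i] \<in> tree m \<longleftrightarrow> x \<in> tree m \<and> i < m"
  by (auto simp: tree_def)

lemma butlast_in_tree: "x \<in> tree m \<Longrightarrow> butlast x \<in> tree m"
  by (auto simp: tree_def dest: in_set_butlastD)

lemma p_beta_pos: "0 \<le> \<beta> \<Longrightarrow> \<beta> < 1 \<Longrightarrow> 0 < p_beta \<beta>"
  by (auto simp: p_beta_def)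

context
  fixes m :: nat and \<beta> lam :: real and u :: "nat list \<Rightarrow> real"
  assumes beta_nonneg: "0 \<le> \<beta>" and beta_less_1: "\<beta> < 1"
    and eigen_eq: "\<forall>x\<in>tree m. - Delta m \<beta> u x = lam * u x"
    and u_nonneg: "\<forall>x\<in>tree m. 0 \<le> u x"
begin

lemma eigen_eq_root: "(\<Sum>i<m. u [i]) / real m = (1 - lam) * u []"
proof -
  have "- Delta m \<beta> u [] = lam * u []"
    using eigen_eq by (simp add: tree_def)
  then show ?thesis
    by (simp add: Delta_def algebra_simps)
qed

lemma eigen_eq_nonroot:
  assumes "x \<in> tree m" "x \<noteq> []"
  shows "\<beta> * u (butlast x) + (1 - \<beta>) / real m * (\<Sum>i<m. u (x @ [i]))
           = (1 - lam * p_beta \<beta> ^ length x) * u x"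
proof -
  have "p_beta \<beta> ^ length x \<noteq> 0"
    using p_beta_pos[OF beta_nonneg beta_less_1] by simp
  moreover have "- Delta m \<beta> u x = lam * u x"
    using eigen_eq assms(1) by blast
  ultimately show ?thesis
    using assms(2) by (simp add: Delta_def field_simps eq_divide_eq)
qed

lemma children_vanish_if_sum_zero:
  assumes "x \<in> tree m" "(\<Sum>i<m. u (x @ [i])) = 0"
  shows "\<forall>i<m. u (x @ [i]) = 0"
  using assms u_nonneg by (subst (asm) sum_nonneg_eq_0_iff) (auto simp: snoc_in_tree_iff)

lemma neighbours_vanish_at_zero:
  assumes x: "x \<in> tree m" "x \<noteq> []" and "u x = 0"
  shows "\<beta> * u (butlast x) = 0" and "\<forall>i<m. u (x @ [i]) = 0"
proof -
  let ?S = "\<Sum>i<m. u (x @ [i])"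
  have sum: "\<beta> * u (butlast x) + (1 - \<beta>) / real m * ?S = 0"
    using eigen_eq_nonroot[OF x] \<open>u x = 0\<close> by simp
  have parent: "0 \<le> \<beta> * u (butlast x)"
    using u_nonneg butlast_in_tree[OF x(1)] beta_nonneg by simp
  have "0 \<le> ?S"
    using u_nonneg x(1) by (auto simp: snoc_in_tree_iff intro: sum_nonneg)
  then have children: "0 \<le> (1 - \<beta>) / real m * ?S"
    using beta_less_1 by simp
  show "\<beta> * u (butlast x) = 0"
    using sum parent children by linarith
  have "(1 - \<beta>) / real m * ?S = 0"
    using sum parent children by linarith
  then have "?S = 0 \<or> m = 0"
    using beta_less_1 by simp
  then show "\<forall>i<m. u (x @ [i]) = 0"
    using children_vanish_if_sum_zero[OF x(1)] by auto
qed

lemma vanishes_below_zero: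
  assumes x: "x \<in> tree m" "x \<noteq> []" "u x = 0"
  shows "z \<in> tree m \<Longrightarrow> u (x @ z) = 0"
proof (induction z rule: rev_induct)
  case Nil
  show ?case using x by simp
next
  case (snoc i z)
  then have "z \<in> tree m" "i < m"
    by (simp_all add: snoc_in_tree_iff)
  with snoc.IH have "u (x @ z) = 0" by simp
  moreover have "x @ z \<in> tree m"
    using x(1) \<open>z \<in> tree m\<close> by (auto simp: tree_def)
  ultimately show ?case
    using neighbours_vanish_at_zero(2)[of "x @ z"] x(2) \<open>i < m\<close> by simp
qed

lemma vanishes_if_root_and_children_sum_vanish:
  assumes "u [] = 0" and "(\<Sum>i<m. u [i]) = 0" and "y \<in> tree m"
  shows "u y = 0"
proof (cases y)
  case Nil
  then show ?thesis using assms(1) by simp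
next
  case (Cons a z)
  have children: "\<forall>i<m. u [i] = 0"
    using children_vanish_if_sum_zero[of "[]"] assms(2) by (simp add: tree_def)
  have "[a] \<in> tree m" "z \<in> tree m"
    using Cons assms(3) by (simp_all add: tree_def)
  moreover have "u [a] = 0"
    using children \<open>[a] \<in> tree m\<close> by (simp add: tree_def)
  ultimately show ?thesis
    using vanishes_below_zero[of "[a]" z] Cons by simp
qed

lemma root_and_children_vanish_if_gt_1:
  assumes "1 < lam"
  shows "u [] = 0" and "(\<Sum>i<m. u [i]) = 0"
proof -
  have "0 \<le> u []" "0 \<le> (\<Sum>i<m. u [i])"
    using u_nonneg by (auto simp: tree_def intro: sum_nonneg)
  with assms have "(1 - lam) * u [] \<le> 0" "0 \<le> (\<Sum>i<m. u [i]) / real m"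
    by (simp_all add: mult_nonpos_nonneg)
  with eigen_eq_root have "(1 - lam) * u [] = 0" "(\<Sum>i<m. u [i]) / real m = 0"
    by simp_all
  then show "u [] = 0" "(\<Sum>i<m. u [i]) = 0"
    using assms by (auto simp: divide_eq_0_iff)
qed

lemma root_and_children_vanish_if_eq_1:
  assumes "lam = 1" and "0 < \<beta>" and "0 < m"
  shows "u [] = 0" and "(\<Sum>i<m. u [i]) = 0"
proof -
  show sum: "(\<Sum>i<m. u [i]) = 0"
    using eigen_eq_root assms(1,3) by simp
  then have "u [0] = 0"
    using children_vanish_if_sum_zero[of "[]"] assms(3) by (simp add: tree_def)
  then show "u [] = 0"
    using neighbours_vanish_at_zero(1)[of "[0]"] assms(2,3) by (simp add: tree_def)
qed

end

theorem lemma3p2: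
  fixes m :: nat and \<beta> lam :: real
  assumes "m \<ge> 2" and "0 \<le> \<beta>" and "\<beta> < 1"
    and "is_principal_eigenvalue m \<beta> lam"
  shows "lam \<le> 1 \<and> (0 < \<beta> \<and> \<beta> \<le> 1/2 \<longrightarrow> lam < 1)"
proof -
  obtain u where eq: "\<forall>x\<in>tree m. - Delta m \<beta> u x = lam * u x"
    and nonzero: "\<exists>x\<in>tree m. u x \<noteq> 0" and nonneg: "\<forall>x\<in>tree m. 0 \<le> u x"
    using assms(4) by (auto simp: is_principal_eigenvalue_def is_eigenfunction_def)
  note solution = assms(2,3) eq nonneg
  have not_both_zero: "\<not> (u [] = 0 \<and> (\<Sum>i<m. u [i]) = 0)"
    using vanishes_if_root_and_children_sum_vanish[OF solution] nonzero by blast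
  have "\<not> 1 < lam"
    using root_and_children_vanish_if_gt_1[OF solution] not_both_zero by blast
  moreover have "lam \<noteq> 1" if "0 < \<beta>"
    using root_and_children_vanish_if_eq_1[OF solution _ that] assms(1) not_both_zero by force
  ultimately show ?thesis by auto
qed

end
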